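(* Let $t$ be real with $1\leq t\leq n$. If $S(t)>0$, then $\alpha(G)\leq\lfloor t\rfloor$.
   Context: Let $G$ be a simple graph with vertex set $V=\{1,\dots,n\}$, edge set $E$, adjacency matrix $A$ and stability number $\alpha(G)$ (maximum size of a set of pairwise nonadjacent vertices). Let $e$ be the all-ones vector, $\langle M,N\rangle=\operatorname{trace}(M^TN)$, and $X\geq 0$ mean entrywise nonnegativity. For real $t$ with $1\leq t\leq n$, $Q(t)$ is the semidefinite program $$\min \tfrac12\langle A,X\rangle\ \text{ s.t. } X\succeq 0,\ X\geq 0,\ \operatorname{trace}(X)=t,\ Xe=t\operatorname{diag}(X)$$ over symmetric $n\times n$ matrices $X$, and $S(t)$ denotes its optimal value. *)

theory Defs
  imports "HOL-Analysis.Analysis"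
begin

text \<open>Simple graph on a finite vertex type 'n (n = CARD('n)), given by an
edge relation E which is symmetric and irreflexive.\<close>
definition simple_graph :: "('n::finite \<Rightarrow> 'n \<Rightarrow> bool) \<Rightarrow> bool" where
  "simple_graph E \<longleftrightarrow> (\<forall>i j. E i j \<longleftrightarrow> E j i) \<and> (\<forall>i. \<not> E i i)"

definition adj_matrix :: "('n::finite \<Rightarrow> 'n \<Rightarrow> bool) \<Rightarrow> real^'n^'n" where
  "adj_matrix E = (\<chi> i j. if E i j then 1 else 0)"

definition stable_set :: "('n::finite \<Rightarrow> 'n \<Rightarrow> bool) \<Rightarrow> 'n set \<Rightarrow> bool" where
  "stable_set E S \<longleftrightarrow> (\<forall>i\<in>S. \<forall>j\<in>S. \<not> E i j)"

definition stability_number :: "('n::finite \<Rightarrow> 'n \<Rightarrow> bool) \<Rightarrow> nat" where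
  "stability_number E = Max (card ` {S. stable_set E S})"

definition frob :: "real^'n^'n \<Rightarrow> real^'n^'n \<Rightarrow> real" where
  "frob M N = trace (transpose M ** N)"

definition psd :: "real^'n^'n \<Rightarrow> bool" where
  "psd X \<longleftrightarrow> transpose X = X \<and> (\<forall>x. 0 \<le> x \<bullet> (X *v x))"

definition diag_vec :: "real^'n^'n \<Rightarrow> real^'n" where
  "diag_vec X = (\<chi> i. X $ i $ i)"

definition Q_feasible :: "real \<Rightarrow> (real^'n::finite^'n) set" where
  "Q_feasible t = {X. transpose X = X \<and> psd X \<and> (\<forall>i j. 0 \<le> X $ i $ j)
      \<and> trace X = t \<and> X *v (\<chi> i. 1) = t *\<^sub>R diag_vec X}"

definition S_val :: "('n::finite \<Rightarrow> 'n \<Rightarrow> bool) \<Rightarrow> real \<Rightarrow> real" where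
  "S_val E t = Inf ((\<lambda>X. frob (adj_matrix E) X / 2) ` Q_feasible t)"

end

theory Submission
  imports Defs
begin

text \<open>If \<open>\<alpha>(G) > \<lfloor>t\<rfloor>\<close>, pick a stable set \<open>S\<close> of size \<open>k > t\<close>. The matrix
  \<open>a I\<^sub>S + b J\<^sub>S\<close> (identity plus all-ones block supported on \<open>S \<times> S\<close>) with
  \<open>a = t(k - t)/(k(k - 1))\<close> and \<open>b = t(t - 1)/(k(k - 1))\<close> is feasible for \<open>Q(t)\<close>:
  it is a nonnegative combination of two PSD matrices, its trace is \<open>k(a + b) = t\<close> and
  its row sums are \<open>a + kb = t(a + b)\<close>. Since \<open>S\<close> is stable, its support misses every
  edge, so \<open>S(t) \<le> 0\<close>.\<close>

lemma frob_adj_matrix_nonneg: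
  assumes "\<forall>i j. 0 \<le> X $ i $ j"
  shows "0 \<le> frob (adj_matrix E) X"
  unfolding frob_def trace_def matrix_matrix_mult_def adj_matrix_def transpose_def
  using assms by (auto intro!: sum_nonneg)

lemma S_val_le_frob:
  assumes "X \<in> Q_feasible t"
  shows "S_val E t \<le> frob (adj_matrix E) X / 2"
  unfolding S_val_def
proof (rule cInf_lower)
  show "frob (adj_matrix E) X / 2 \<in> (\<lambda>X. frob (adj_matrix E) X / 2) ` Q_feasible t"
    using assms by blast
  show "bdd_below ((\<lambda>X. frob (adj_matrix E) X / 2) ` Q_feasible t)"
    unfolding bdd_below_def Q_feasible_def by (auto intro!: exI[of _ 0] frob_adj_matrix_nonneg)
qed

definition block_matrix :: "'n::finite set \<Rightarrow> real \<Rightarrow> real \<Rightarrow> real^'n^'n" where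
  "block_matrix S a b = (\<chi> i j. if i \<in> S \<and> j \<in> S then (if i = j then a else 0) + b else 0)"

lemma block_matrix_nth:
  "block_matrix S a b $ i $ j = (if i \<in> S \<and> j \<in> S then (if i = j then a else 0) + b else 0)"
  unfolding block_matrix_def by simp

lemma transpose_block_matrix: "transpose (block_matrix S a b) = block_matrix S a b"
  unfolding transpose_def by (simp add: vec_eq_iff block_matrix_nth)

lemma block_matrix_mult_vec:
  "(block_matrix S a b *v x) $ i = (if i \<in> S then a * x $ i + b * (\<Sum>j\<in>S. x $ j) else 0)"
proof (cases "i \<in> S")
  case True
  have "(block_matrix S a b *v x) $ i
      = (\<Sum>j\<in>UNIV. if j \<in> S then ((if i = j then a else 0) + b) * x $ j else 0)"
    unfolding matrix_vector_mult_def using True by (auto simp: block_matrix_nth intro!: sum.cong)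
  also have "\<dots> = (\<Sum>j\<in>S. ((if i = j then a else 0) + b) * x $ j)"
    by (simp add: sum.If_cases)
  also have "\<dots> = (\<Sum>j\<in>S. (if i = j then a * x $ j else 0)) + (\<Sum>j\<in>S. b * x $ j)"
    by (subst sum.distrib[symmetric]) (auto intro!: sum.cong simp: algebra_simps)
  also have "\<dots> = a * x $ i + b * (\<Sum>j\<in>S. x $ j)"
    using True by (simp add: sum_distrib_left)
  finally show ?thesis using True by simp
next
  case False
  then show ?thesis unfolding matrix_vector_mult_def by (simp add: block_matrix_nth)
qed

lemma quadratic_form_block_matrix:
  "x \<bullet> (block_matrix S a b *v x) = a * (\<Sum>i\<in>S. (x $ i)\<^sup>2) + b * (\<Sum>i\<in>S. x $ i)\<^sup>2"
proof -
  have "x \<bullet> (block_matrix S a b *v x) = (\<Sum>i\<in>S. x $ i * (a * x $ i + b * (\<Sum>j\<in>S. x $ j)))"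
    unfolding inner_vec_def
    by (simp add: block_matrix_mult_vec if_distrib sum.If_cases cong: if_cong)
  also have "\<dots> = a * (\<Sum>i\<in>S. (x $ i)\<^sup>2) + b * (\<Sum>i\<in>S. x $ i)\<^sup>2"
    by (simp add: algebra_simps sum.distrib sum_distrib_left sum_distrib_right power2_eq_square)
  finally show ?thesis .
qed

lemma psd_block_matrix:
  assumes "0 \<le> a" "0 \<le> b"
  shows "psd (block_matrix S a b)"
  unfolding psd_def quadratic_form_block_matrix
  using assms by (auto simp: transpose_block_matrix intro!: add_nonneg_nonneg mult_nonneg_nonneg sum_nonneg)

lemma trace_block_matrix: "trace (block_matrix S a b) = real (card S) * (a + b)"
  unfolding trace_def by (simp add: block_matrix_nth sum.If_cases)

lemma frob_adj_matrix_block_matrix_stable: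
  assumes "stable_set E S"
  shows "frob (adj_matrix E) (block_matrix S a b) = 0"
  unfolding frob_def trace_def matrix_matrix_mult_def adj_matrix_def transpose_def
  using assms unfolding stable_set_def by (auto simp: block_matrix_nth intro!: sum.neutral)

lemma block_matrix_Q_feasible:
  fixes S :: "'n::finite set"
  defines "k \<equiv> real (card S)"
  assumes "2 \<le> card S" and "1 \<le> t" and "t \<le> k"
  shows "block_matrix S (t * (k - t) / (k * (k - 1))) (t * (t - 1) / (k * (k - 1))) \<in> Q_feasible t"
proof -
  define a where "a = t * (k - t) / (k * (k - 1))"
  define b where "b = t * (t - 1) / (k * (k - 1))"
  have k1: "k - 1 > 0" using assms(2) unfolding k_def by simp
  have "0 \<le> a" "0 \<le> b" unfolding a_def b_def using assms k1 by auto
  have "a + b = (t * (k - t) + t * (t - 1)) / (k * (k - 1))"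
    unfolding a_def b_def by (simp add: add_divide_distrib)
  also have "t * (k - t) + t * (t - 1) = t * (k - 1)"
    by (simp add: algebra_simps)
  finally have ab: "a + b = t / k"
    using k1 by simp
  have "a + b * k = (t * (k - t) + t * (t - 1) * k) / (k * (k - 1))"
    unfolding a_def b_def by (simp add: add_divide_distrib)
  also have "t * (k - t) + t * (t - 1) * k = (t * t / k) * (k * (k - 1))"
    using k1 by (simp add: field_simps)
  finally have row_sum: "a + b * k = t * (a + b)"
    using k1 by (simp add: ab)
  have "trace (block_matrix S a b) = t"
    using ab k1 by (simp add: trace_block_matrix flip: k_def)
  moreover have "block_matrix S a b *v (\<chi> i. 1) = t *\<^sub>R diag_vec (block_matrix S a b)"
    using row_sum by (simp add: vec_eq_iff block_matrix_mult_vec diag_vec_def block_matrix_nth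
        flip: k_def)
  ultimately have "block_matrix S a b \<in> Q_feasible t"
    unfolding Q_feasible_def
    using \<open>0 \<le> a\<close> \<open>0 \<le> b\<close>
    by (simp add: transpose_block_matrix psd_block_matrix block_matrix_nth)
  then show ?thesis unfolding a_def b_def .
qed

lemma S_val_nonpos_if_large_stable_set:
  assumes "stable_set E S" "1 \<le> t" "2 \<le> card S" "t \<le> real (card S)"
  shows "S_val E t \<le> 0"
  using S_val_le_frob[where E = E, OF block_matrix_Q_feasible[OF assms(3,2,4)]]
  by (simp add: frob_adj_matrix_block_matrix_stable[OF assms(1)])

lemma stability_number_attained:
  fixes E :: "'n::finite \<Rightarrow> 'n \<Rightarrow> bool"
  obtains S where "stable_set E S" "card S = stability_number E"
proof -
  have "{} \<in> {S. stable_set E S}" by (simp add: stable_set_def)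
  then have "stability_number E \<in> card ` {S. stable_set E S}"
    unfolding stability_number_def by (intro Max_in) auto
  then show ?thesis using that by (auto simp: image_iff)
qed

theorem mainTheorem14:
  fixes E :: "'n::finite \<Rightarrow> 'n \<Rightarrow> bool" and t :: real
  assumes "simple_graph E"
    and "1 \<le> t" and "t \<le> real CARD('n)"
    and "S_val E t > 0"
  shows "int (stability_number E) \<le> \<lfloor>t\<rfloor>"
proof (rule ccontr)
  assume "\<not> ?thesis"
  obtain S where S: "stable_set E S" "card S = stability_number E"
    by (rule stability_number_attained)
  with \<open>\<not> ?thesis\<close> \<open>1 \<le> t\<close> have "2 \<le> card S" "t \<le> real (card S)"
    by linarith+
  with S(1) \<open>1 \<le> t\<close> have "S_val E t \<le> 0"
    by (rule S_val_nonpos_if_large_stable_set)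
  with \<open>S_val E t > 0\<close> show False by simp
qed

end
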